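(* Under the hypotheses of Theorem 2.3 (a commuting pair of strict contractions $T_1,T_2$ on a Banach space $\mathbb X$ with each $A_{T_i}$ a norm, $\mathbb X_i=(\mathbb X,A_{T_i})$, and a unitary $S$ on $\mathbb X_1\oplus_2\mathbb X_2$ with $S(T_2x,x)=(x,T_1x)$ for all $x\in\mathbb X$), the operators on $\widetilde{\mathbb X}=\mathbb X\oplus_2\ell_2(\mathbb X_1\oplus_2\mathbb X_2)$ given by $$V_1(x,(x_1,x_2),(x_3,x_4),\dots)=(T_1x,\ S(x,x_2),\ S(x_1,x_4),\ S(x_3,x_6),\dots),$$ $$V_2(x,(x_1,x_2),(x_3,x_4),\dots)=(T_2x,\ (x_1',x),\ (x_3',x_2'),\ (x_5',x_4'),\dots),$$ where $(x_{2n-1}',x_{2n}')=S^{-1}(x_{2n-1},x_{2n})$ for $n\ge1$, are commuting linear isometries, satisfy $P_{\mathbb X}V_1^{s_1}V_2^{s_2}x=T_1^{s_1}T_2^{s_2}x$ for all $x\in\mathbb X$, $s_1,s_2\ge0$, and $\widetilde{\mathbb X}$ is the closed linear span of $\{V_1^{s_1}V_2^{s_2}x: x\in\mathbb X,\ s_1,s_2\ge0\}$.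
   Context: $A_T(x)=(\|x\|^2-\|Tx\|^2)^{1/2}$; $(\mathbb X,A_T)$ is $\mathbb X$ with norm $A_T$. $\oplus_2$ is the direct $2$-sum with norm $(\|x_1\|^2+\|x_2\|^2)^{1/2}$; $\ell_2(\mathbb Y)$ is square-summable sequences with the $\ell_2$ norm. Elements of $\widetilde{\mathbb X}$ are written $(x,(x_1,x_2),(x_3,x_4),\dots)$ with $x\in\mathbb X$, $x_{2n-1}\in\mathbb X_1$, $x_{2n}\in\mathbb X_2$; $\mathbb X$ is identified with $\{(x,\mathbf 0,\dots)\}$ and $P_{\mathbb X}$ is the coordinate projection onto the first entry. A unitary is a surjective linear isometry. *)

theory Defs
  imports "HOL-Analysis.Analysis"
begin

definition A_T :: "('a::real_normed_vector \<Rightarrow> 'a) \<Rightarrow> 'a \<Rightarrow> real" where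
  "A_T T x = sqrt ((norm x)\<^sup>2 - (norm (T x))\<^sup>2)"

definition is_norm :: "('a::real_vector \<Rightarrow> real) \<Rightarrow> bool" where
  "is_norm N \<longleftrightarrow> (\<forall>x. 0 \<le> N x) \<and> (\<forall>x. N x = 0 \<longleftrightarrow> x = 0)
     \<and> (\<forall>c x. N (c *\<^sub>R x) = \<bar>c\<bar> * N x) \<and> (\<forall>x y. N (x + y) \<le> N x + N y)"

definition strict_contraction :: "('a::real_normed_vector \<Rightarrow> 'a) \<Rightarrow> bool" where
  "strict_contraction T \<longleftrightarrow> bounded_linear T \<and> onorm T < 1"

definition sum2_norm :: "('a::real_normed_vector \<Rightarrow> 'a) \<Rightarrow> ('a \<Rightarrow> 'a) \<Rightarrow> 'a \<times> 'a \<Rightarrow> real" where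
  "sum2_norm T1 T2 p = sqrt ((A_T T1 (fst p))\<^sup>2 + (A_T T2 (snd p))\<^sup>2)"

text \<open>Elements of X~ = X \<oplus>_2 l_2(X_1 \<oplus>_2 X_2) are represented as pairs (x, f) where
  f n = (x_{2n+1}, x_{2n+2}) for n = 0, 1, 2, ...; the carrier consists of those pairs
  with square-summable sequence part.\<close>
type_synonym 'a tl = "'a \<times> (nat \<Rightarrow> 'a \<times> 'a)"

definition Xt :: "('a::real_normed_vector \<Rightarrow> 'a) \<Rightarrow> ('a \<Rightarrow> 'a) \<Rightarrow> 'a tl set" where
  "Xt T1 T2 = {z. summable (\<lambda>n. (sum2_norm T1 T2 (snd z n))\<^sup>2)}"

definition tnorm :: "('a::real_normed_vector \<Rightarrow> 'a) \<Rightarrow> ('a \<Rightarrow> 'a) \<Rightarrow> 'a tl \<Rightarrow> real" where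
  "tnorm T1 T2 z = sqrt ((norm (fst z))\<^sup>2 + (\<Sum>n. (sum2_norm T1 T2 (snd z n))\<^sup>2))"

definition tadd :: "'a::real_vector tl \<Rightarrow> 'a tl \<Rightarrow> 'a tl" where
  "tadd z w = (fst z + fst w, \<lambda>n. snd z n + snd w n)"

definition tscale :: "real \<Rightarrow> 'a::real_vector tl \<Rightarrow> 'a tl" where
  "tscale c z = (c *\<^sub>R fst z, \<lambda>n. c *\<^sub>R snd z n)"

definition tzero :: "'a::real_vector tl" where
  "tzero = (0, \<lambda>n. (0, 0))"

definition tsub :: "'a::real_vector tl \<Rightarrow> 'a tl \<Rightarrow> 'a tl" where
  "tsub z w = tadd z (tscale (-1) w)"

definition temb :: "'a::real_vector \<Rightarrow> 'a tl" where
  "temb x = (x, \<lambda>n. (0, 0))"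

definition V1 :: "('a \<Rightarrow> 'a) \<Rightarrow> ('a \<times> 'a \<Rightarrow> 'a \<times> 'a) \<Rightarrow> 'a tl \<Rightarrow> 'a tl" where
  "V1 T1 S z = (T1 (fst z),
     \<lambda>n. case n of 0 \<Rightarrow> S (fst z, snd (snd z 0))
                 | Suc m \<Rightarrow> S (fst (snd z m), snd (snd z (Suc m))))"

definition V2 :: "('a \<Rightarrow> 'a) \<Rightarrow> ('a \<times> 'a \<Rightarrow> 'a \<times> 'a) \<Rightarrow> 'a tl \<Rightarrow> 'a tl" where
  "V2 T2 S z = (T2 (fst z),
     \<lambda>n. case n of 0 \<Rightarrow> (fst (inv S (snd z 0)), fst z)
                 | Suc m \<Rightarrow> (fst (inv S (snd z (Suc m))), snd (inv S (snd z m))))"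

end

theory Submission
  imports Defs
begin

(* The intertwining identity S (T2 x, x) = (x, T1 x) is exactly what makes V1 and V2 commute.
   They are isometries because norm x ^ 2 = norm (T x) ^ 2 + A_T T x ^ 2 moves the defect of
   T1, T2 into the first l_2 slot, while S (resp. inv S) preserves the remaining part.
   For minimality, V1 (temb x) - temb (T1 x) and V2 (temb y) - temb (T2 y) put S (x, 0) and
   (0, y) into the first slot; V1 and V2 shift these vectors one slot further, and since V1
   turns (0, y) into S (0, y) in the same slot and S is onto, every vector supported in a
   single slot lies in the span. Hence so do all truncations of an element, which converge
   to it. *)

definition tsingle :: "nat \<Rightarrow> 'a::real_vector \<times> 'a \<Rightarrow> 'a tl" where
  "tsingle n p = (0, \<lambda>m. if m = n then p else 0)"

definition ttrunc :: "nat \<Rightarrow> 'a::real_vector tl \<Rightarrow> 'a tl" where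
  "ttrunc K z = (fst z, \<lambda>n. if n < K then snd z n else 0)"

lemma tzero_eq: "tzero = (0, \<lambda>n. 0)"
  by (simp add: tzero_def zero_prod_def)

lemma tadd_assoc: "tadd (tadd z w) u = tadd z (tadd w u)"
  by (simp add: tadd_def algebra_simps)

lemma tadd_tzero_left: "tadd tzero z = z"
  by (simp add: tadd_def tzero_eq)

lemma tscale_tzero: "tscale c tzero = tzero"
  by (simp add: tscale_def tzero_eq)

lemma tscale_tadd: "tscale c (tadd z w) = tadd (tscale c z) (tscale c w)"
  by (simp add: tscale_def tadd_def scaleR_add_right)

lemma tscale_tscale: "tscale c (tscale d z) = tscale (c * d) z"
  by (simp add: tscale_def)

lemma tscale_one: "tscale 1 z = z"
  by (simp add: tscale_def)

lemma tsub_tadd_cancel_left: "tsub (tadd z w) z = w"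
  by (simp add: tsub_def tscale_def tadd_def)

lemma tadd_tsingle: "tadd (tsingle n p) (tsingle n q) = tsingle n (p + q)"
  by (auto simp: tadd_def tsingle_def)

lemma fst_V1 [simp]: "fst (V1 T1 S z) = T1 (fst z)"
  by (simp add: V1_def)

lemma fst_V2 [simp]: "fst (V2 T2 S z) = T2 (fst z)"
  by (simp add: V2_def)

lemma fst_V1_pow: "fst ((V1 T1 S ^^ n) z) = (T1 ^^ n) (fst z)"
  by (induction n) auto

lemma fst_V2_pow: "fst ((V2 T2 S ^^ n) z) = (T2 ^^ n) (fst z)"
  by (induction n) auto

lemma bij_linear_imp_inv_linear:
  assumes "linear f" "bij f"
  shows "linear (inv f)"
proof (rule linearI)
  have inv_eq: "inv f y = x" if "f x = y" for x y
    using assms(2) that by (simp add: bij_is_inj inv_f_eq)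
  have f_inv: "f (inv f y) = y" for y
    using assms(2) by (simp add: bij_is_surj surj_f_inv_f)
  show "inv f (x + y) = inv f x + inv f y" for x y
    by (rule inv_eq) (simp add: linear_add[OF assms(1)] f_inv)
  show "inv f (c *\<^sub>R x) = c *\<^sub>R inv f x" for c x
    by (rule inv_eq) (simp add: linear_scale[OF assms(1)] f_inv)
qed

lemma sum2_norm_squared:
  "(sum2_norm T1 T2 p)\<^sup>2 = (A_T T1 (fst p))\<^sup>2 + (A_T T2 (snd p))\<^sup>2"
  by (simp add: sum2_norm_def)

lemma A_T_squared:
  assumes "norm (T x) \<le> norm x"
  shows "(A_T T x)\<^sup>2 = (norm x)\<^sup>2 - (norm (T x))\<^sup>2"
  using assms by (simp add: A_T_def power_mono)

lemma sum2_norm_zero: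
  assumes "linear T1" "linear T2"
  shows "sum2_norm T1 T2 0 = 0"
  using assms by (simp add: sum2_norm_def A_T_def linear_0)

lemma sum2_norm_eq_0_iff:
  assumes "is_norm (A_T T1)" "is_norm (A_T T2)"
  shows "sum2_norm T1 T2 p = 0 \<longleftrightarrow> p = 0"
  using assms by (auto simp: sum2_norm_def is_norm_def prod_eq_iff sum_power2_eq_zero_iff)

lemma strict_contraction_norm_le:
  assumes "strict_contraction T"
  shows "norm (T x) \<le> norm x"
proof -
  have "bounded_linear T" "onorm T < 1"
    using assms by (auto simp: strict_contraction_def)
  then have "norm (T x) \<le> onorm T * norm x"
    by (simp add: onorm)
  also have "\<dots> \<le> norm x"
    using \<open>onorm T < 1\<close> by (simp add: mult_left_le_one_le onorm_pos_le[OF \<open>bounded_linear T\<close>])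
  finally show ?thesis .
qed

lemma strict_contraction_linear: "strict_contraction T \<Longrightarrow> linear T"
  by (simp add: strict_contraction_def bounded_linear.linear)

lemma inj_if_sum2_norm_preserving:
  assumes "is_norm (A_T T1)" "is_norm (A_T T2)" "linear S"
    and "\<And>p. sum2_norm T1 T2 (S p) = sum2_norm T1 T2 p"
  shows "inj S"
proof (unfold linear_inj_iff_eq_0[OF assms(3)], intro allI impI)
  fix p
  assume "S p = 0"
  then have "sum2_norm T1 T2 p = 0"
    using assms(4)[of p] sum2_norm_eq_0_iff[OF assms(1,2), of 0] by simp
  then show "p = 0"
    using sum2_norm_eq_0_iff[OF assms(1,2)] by simp
qed

lemma sums_add_shifted:
  fixes a b h :: "nat \<Rightarrow> real"
  assumes "summable (\<lambda>n. a n + b n)" "\<And>n. 0 \<le> a n" "\<And>n. 0 \<le> b n"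
    and "h 0 = c + b 0" "\<And>n. h (Suc n) = a n + b (Suc n)"
  shows "h sums (c + (\<Sum>n. a n + b n))"
proof -
  have "summable a" "summable b"
    using assms(1-3) by (auto intro: summable_comparison_test'[OF assms(1)])
  then have "(\<lambda>n. a n + b (Suc n)) sums (suminf a + (suminf b - b 0))"
    by (intro sums_add summable_sums) (auto simp: sums_Suc_iff)
  then have "(\<lambda>n. h (Suc n)) sums (suminf a + (suminf b - b 0))"
    using assms(5) by simp
  then have "h sums (c + (suminf a + suminf b))"
    using assms(4) by (simp add: sums_Suc_iff algebra_simps)
  then show ?thesis
    using suminf_add[OF \<open>summable a\<close> \<open>summable b\<close>] by simp
qed

lemma Xt_tnorm_if_sums:
  assumes "(\<lambda>n. (sum2_norm T1 T2 (snd z n))\<^sup>2) sums s"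
  shows "z \<in> Xt T1 T2 \<and> tnorm T1 T2 z = sqrt ((norm (fst z))\<^sup>2 + s)"
  using assms by (auto simp: Xt_def tnorm_def sums_iff)

lemma tnorm_tsub_ttrunc_tendsto:
  assumes "linear T1" "linear T2" "z \<in> Xt T1 T2"
  shows "(\<lambda>K. tnorm T1 T2 (tsub z (ttrunc K z))) \<longlonglongrightarrow> 0"
proof -
  define g where "g = (\<lambda>n. (sum2_norm T1 T2 (snd z n))\<^sup>2)"
  have "summable g"
    using assms(3) by (simp add: Xt_def g_def)
  have "tnorm T1 T2 (tsub z (ttrunc K z)) = sqrt (\<Sum>i. g (i + K))" for K
  proof -
    have tail: "tsub z (ttrunc K z) = (0, \<lambda>n. if n < K then 0 else snd z n)"
      by (auto simp: tsub_def tadd_def tscale_def ttrunc_def)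
    have "(\<lambda>n. (sum2_norm T1 T2 (snd (tsub z (ttrunc K z)) n))\<^sup>2) = (\<lambda>n. if n < K then 0 else g n)"
      by (auto simp: tail g_def sum2_norm_zero[OF assms(1,2)])
    moreover have "(\<lambda>i. g (i + K)) sums (\<Sum>i. g (i + K))"
      using \<open>summable g\<close> by (simp add: summable_sums)
    then have "(\<lambda>n. if n < K then 0 else g n) sums (\<Sum>i. g (i + K))"
      using sums_iff_shift[of "\<lambda>n. if n < K then 0 else g n" K] by simp
    ultimately show ?thesis
      unfolding tnorm_def by (simp add: tail sums_iff)
  qed
  moreover have "(\<lambda>K. sqrt (\<Sum>i. g (i + K))) \<longlonglongrightarrow> 0"
    using tendsto_real_sqrt[OF suminf_exist_split2[OF \<open>summable g\<close>]] by simp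
  ultimately show ?thesis
    by simp
qed

inductive_set dilation_span ::
  "('a::real_vector \<Rightarrow> 'a) \<Rightarrow> ('a \<Rightarrow> 'a) \<Rightarrow> ('a \<times> 'a \<Rightarrow> 'a \<times> 'a) \<Rightarrow> 'a tl set"
  for T1 T2 S
where
  tzero: "tzero \<in> dilation_span T1 T2 S"
| add_monomial: "w \<in> dilation_span T1 T2 S \<Longrightarrow>
    tadd (tscale c ((V1 T1 S ^^ a) ((V2 T2 S ^^ b) (temb x)))) w \<in> dilation_span T1 T2 S"

lemma dilation_span_finite_combination:
  assumes "w \<in> dilation_span T1 T2 S"
  shows "\<exists>k c s1 s2 x. w = foldr tadd
    (map (\<lambda>i. tscale (c i) ((V1 T1 S ^^ s1 i) ((V2 T2 S ^^ s2 i) (temb (x i))))) [0..<k]) tzero"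
  using assms
proof (induction w rule: dilation_span.induct)
  case tzero
  show ?case
    by (rule exI[of _ 0]) simp
next
  case (add_monomial w c a b y)
  then obtain k c' s1 s2 x where w: "w = foldr tadd
      (map (\<lambda>i. tscale (c' i) ((V1 T1 S ^^ s1 i) ((V2 T2 S ^^ s2 i) (temb (x i))))) [0..<k]) tzero"
    by blast
  show ?case
    by (rule exI[of _ "Suc k"], rule exI[of _ "case_nat c c'"], rule exI[of _ "case_nat a s1"],
        rule exI[of _ "case_nat b s2"], rule exI[of _ "case_nat y x"]) (simp only: map_upt_Suc, simp add: w)
qed

lemma dilation_span_tadd:
  "w \<in> dilation_span T1 T2 S \<Longrightarrow> u \<in> dilation_span T1 T2 S \<Longrightarrow> tadd w u \<in> dilation_span T1 T2 S"
  by (induction w rule: dilation_span.induct)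
    (auto simp: tadd_tzero_left tadd_assoc intro: dilation_span.intros)

lemma dilation_span_tscale:
  "w \<in> dilation_span T1 T2 S \<Longrightarrow> tscale c w \<in> dilation_span T1 T2 S"
  by (induction w rule: dilation_span.induct)
    (auto simp: tscale_tzero tscale_tadd tscale_tscale intro: dilation_span.intros)

lemma dilation_span_tsub:
  "w \<in> dilation_span T1 T2 S \<Longrightarrow> u \<in> dilation_span T1 T2 S \<Longrightarrow> tsub w u \<in> dilation_span T1 T2 S"
  unfolding tsub_def by (intro dilation_span_tadd dilation_span_tscale)

lemma temb_in_dilation_span: "temb x \<in> dilation_span T1 T2 S"
  using dilation_span.add_monomial[OF dilation_span.tzero, where c = 1 and a = 0 and b = 0 and x = x]
  by (simp add: tscale_one tadd_def tzero_eq temb_def zero_prod_def)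

locale dilation_setting =
  fixes T1 T2 :: "'a::real_vector \<Rightarrow> 'a"
    and S :: "'a \<times> 'a \<Rightarrow> 'a \<times> 'a"
  assumes linear_T1: "linear T1"
    and linear_T2: "linear T2"
    and commute: "\<And>x. T1 (T2 x) = T2 (T1 x)"
    and linear_S: "linear S"
    and bij_S: "bij S"
    and S_intertwines: "\<And>x. S (T2 x, x) = (x, T1 x)"
begin

lemma inv_S_S [simp]: "inv S (S p) = p"
  using bij_S by (simp add: bij_is_inj)

lemma S_inv_S [simp]: "S (inv S p) = p"
  using bij_S by (simp add: bij_is_surj surj_f_inv_f)

lemma linear_inv_S: "linear (inv S)"
  using bij_linear_imp_inv_linear[OF linear_S bij_S] .

lemma S_zero [simp]: "S (0, 0) = (0, 0)"
  using linear_0[OF linear_S] by (simp add: zero_prod_def)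

lemma inv_S_zero [simp]: "inv S (0, 0) = (0, 0)"
  using linear_0[OF linear_inv_S] by (simp add: zero_prod_def)

lemma V1_tadd: "V1 T1 S (tadd z w) = tadd (V1 T1 S z) (V1 T1 S w)"
  by (simp add: V1_def tadd_def linear_add[OF linear_T1] fun_eq_iff split: nat.split)
     (metis add_Pair linear_add[OF linear_S])

lemma V1_tscale: "V1 T1 S (tscale c z) = tscale c (V1 T1 S z)"
  by (simp add: V1_def tscale_def linear_scale[OF linear_T1] fun_eq_iff split: nat.split)
     (metis scaleR_Pair linear_scale[OF linear_S])

lemma V2_tadd: "V2 T2 S (tadd z w) = tadd (V2 T2 S z) (V2 T2 S w)"
  by (simp add: V2_def tadd_def linear_add[OF linear_T2] linear_add[OF linear_inv_S]
      fun_eq_iff split: nat.split)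

lemma V2_tscale: "V2 T2 S (tscale c z) = tscale c (V2 T2 S z)"
  by (simp add: V2_def tscale_def linear_scale[OF linear_T2] linear_scale[OF linear_inv_S]
      fun_eq_iff split: nat.split)

lemma V1_tzero: "V1 T1 S tzero = tzero"
  by (simp add: V1_def tzero_def linear_0[OF linear_T1] fun_eq_iff split: nat.split)

lemma V2_tzero: "V2 T2 S tzero = tzero"
  by (simp add: V2_def tzero_def linear_0[OF linear_T2] fun_eq_iff split: nat.split)

lemma V1_V2_commute: "V1 T1 S (V2 T2 S z) = V2 T2 S (V1 T1 S z)"
  by (simp add: V1_def V2_def commute S_intertwines fun_eq_iff split: nat.split)

lemma V2_V1_pow_commute: "V2 T2 S ((V1 T1 S ^^ n) z) = (V1 T1 S ^^ n) (V2 T2 S z)"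
  by (induction n) (simp_all add: V1_V2_commute[symmetric])

lemma dilation_span_V1:
  "w \<in> dilation_span T1 T2 S \<Longrightarrow> V1 T1 S w \<in> dilation_span T1 T2 S"
proof (induction w rule: dilation_span.induct)
  case tzero
  then show ?case
    by (simp add: V1_tzero dilation_span.tzero)
next
  case (add_monomial w c a b x)
  then show ?case
    using dilation_span.add_monomial[of "V1 T1 S w" T1 T2 S c "Suc a" b x]
    by (simp add: V1_tadd V1_tscale)
qed

lemma dilation_span_V2:
  "w \<in> dilation_span T1 T2 S \<Longrightarrow> V2 T2 S w \<in> dilation_span T1 T2 S"
proof (induction w rule: dilation_span.induct)
  case tzero
  then show ?case
    by (simp add: V2_tzero dilation_span.tzero)
next
  case (add_monomial w c a b x)
  then show ?case
    using dilation_span.add_monomial[of "V2 T2 S w" T1 T2 S c a "Suc b" x]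
    by (simp add: V2_tadd V2_tscale V2_V1_pow_commute)
qed

lemma V1_temb: "V1 T1 S (temb x) = tadd (temb (T1 x)) (tsingle 0 (S (x, 0)))"
  by (simp add: V1_def temb_def tadd_def tsingle_def zero_prod_def fun_eq_iff split: nat.split)

lemma V2_temb: "V2 T2 S (temb x) = tadd (temb (T2 x)) (tsingle 0 (0, x))"
  by (simp add: V2_def temb_def tadd_def tsingle_def zero_prod_def fun_eq_iff split: nat.split)

lemma V1_tsingle_right: "V1 T1 S (tsingle n (0, y)) = tsingle n (S (0, y))"
  by (simp add: V1_def tsingle_def linear_0[OF linear_T1] zero_prod_def fun_eq_iff split: nat.split)

lemma V1_tsingle_left: "V1 T1 S (tsingle n (x, 0)) = tsingle (Suc n) (S (x, 0))"
  by (simp add: V1_def tsingle_def linear_0[OF linear_T1] zero_prod_def fun_eq_iff split: nat.split)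

lemma V2_tsingle_S_right: "V2 T2 S (tsingle n (S (0, y))) = tsingle (Suc n) (0, y)"
  by (simp add: V2_def tsingle_def linear_0[OF linear_T2] zero_prod_def fun_eq_iff split: nat.split)

lemma tsingle_in_dilation_span_if_axes:
  assumes "\<And>x. tsingle n (S (x, 0)) \<in> dilation_span T1 T2 S"
    and "\<And>y. tsingle n (0, y) \<in> dilation_span T1 T2 S"
  shows "tsingle n p \<in> dilation_span T1 T2 S"
proof -
  obtain x y where p: "p = S (x, y)"
    by (metis S_inv_S prod.collapse)
  have "tsingle n (S (0, y)) \<in> dilation_span T1 T2 S"
    using dilation_span_V1[OF assms(2)] by (simp add: V1_tsingle_right)
  then have "tadd (tsingle n (S (x, 0))) (tsingle n (S (0, y))) \<in> dilation_span T1 T2 S"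
    by (rule dilation_span_tadd[OF assms(1)])
  then show ?thesis
    by (simp add: p tadd_tsingle linear_add[OF linear_S, symmetric])
qed

lemma tsingle_in_dilation_span: "tsingle n p \<in> dilation_span T1 T2 S"
proof -
  have "tsingle n (S (x, 0)) \<in> dilation_span T1 T2 S \<and> tsingle n (0, y) \<in> dilation_span T1 T2 S"
    for x y
  proof (induction n arbitrary: x y)
    case 0
    have "tsub (V1 T1 S (temb x)) (temb (T1 x)) \<in> dilation_span T1 T2 S"
      "tsub (V2 T2 S (temb y)) (temb (T2 y)) \<in> dilation_span T1 T2 S"
      by (intro dilation_span_tsub dilation_span_V1 dilation_span_V2 temb_in_dilation_span)+
    then show ?case
      by (simp add: V1_temb V2_temb tsub_tadd_cancel_left)
  next
    case (Suc n)
    have "tsingle n (x, 0) \<in> dilation_span T1 T2 S" "tsingle n (S (0, y)) \<in> dilation_span T1 T2 S"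
      using Suc.IH by (blast intro: tsingle_in_dilation_span_if_axes)+
    then show ?case
      using dilation_span_V1 dilation_span_V2 by (fastforce simp: V1_tsingle_left V2_tsingle_S_right)
  qed
  then show ?thesis
    by (blast intro: tsingle_in_dilation_span_if_axes)
qed

lemma ttrunc_in_dilation_span: "ttrunc K z \<in> dilation_span T1 T2 S"
proof (induction K)
  case 0
  have "ttrunc 0 z = temb (fst z)"
    by (simp add: ttrunc_def temb_def zero_prod_def)
  then show ?case
    using temb_in_dilation_span by simp
next
  case (Suc K)
  have "ttrunc (Suc K) z = tadd (ttrunc K z) (tsingle K (snd z K))"
    by (auto simp: ttrunc_def tadd_def tsingle_def)
  then show ?case
    using dilation_span_tadd[OF Suc.IH tsingle_in_dilation_span] by simp
qed

end

locale contractive_dilation_setting = dilation_setting T1 T2 S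
  for T1 T2 :: "'a::real_normed_vector \<Rightarrow> 'a" and S +
  assumes contractive_T1: "\<And>x. norm (T1 x) \<le> norm x"
    and contractive_T2: "\<And>x. norm (T2 x) \<le> norm x"
    and S_isometric: "\<And>p. sum2_norm T1 T2 (S p) = sum2_norm T1 T2 p"
begin

lemma inv_S_isometric: "sum2_norm T1 T2 (inv S p) = sum2_norm T1 T2 p"
  using S_isometric[of "inv S p"] by simp

lemma V1_isometric:
  assumes "z \<in> Xt T1 T2"
  shows "V1 T1 S z \<in> Xt T1 T2 \<and> tnorm T1 T2 (V1 T1 S z) = tnorm T1 T2 z"
proof -
  define a where "a n = (A_T T1 (fst (snd z n)))\<^sup>2" for n
  define b where "b n = (A_T T2 (snd (snd z n)))\<^sup>2" for n
  have ab: "(\<lambda>n. a n + b n) = (\<lambda>n. (sum2_norm T1 T2 (snd z n))\<^sup>2)"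
    by (simp add: a_def b_def sum2_norm_squared)
  have "summable (\<lambda>n. a n + b n)"
    using assms by (simp add: ab Xt_def)
  then have "(\<lambda>n. (sum2_norm T1 T2 (snd (V1 T1 S z) n))\<^sup>2)
      sums ((A_T T1 (fst z))\<^sup>2 + (\<Sum>n. a n + b n))"
    by (rule sums_add_shifted) (simp_all add: a_def b_def V1_def S_isometric sum2_norm_squared)
  then have "V1 T1 S z \<in> Xt T1 T2 \<and> tnorm T1 T2 (V1 T1 S z)
      = sqrt ((norm (T1 (fst z)))\<^sup>2 + (A_T T1 (fst z))\<^sup>2 + (\<Sum>n. (sum2_norm T1 T2 (snd z n))\<^sup>2))"
    by (simp add: Xt_tnorm_if_sums ab add.assoc)
  then show ?thesis
    by (simp add: A_T_squared[OF contractive_T1] tnorm_def)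
qed

lemma V2_isometric:
  assumes "z \<in> Xt T1 T2"
  shows "V2 T2 S z \<in> Xt T1 T2 \<and> tnorm T1 T2 (V2 T2 S z) = tnorm T1 T2 z"
proof -
  define a where "a n = (A_T T2 (snd (inv S (snd z n))))\<^sup>2" for n
  define b where "b n = (A_T T1 (fst (inv S (snd z n))))\<^sup>2" for n
  have ab: "(\<lambda>n. a n + b n) = (\<lambda>n. (sum2_norm T1 T2 (snd z n))\<^sup>2)"
    by (simp add: a_def b_def sum2_norm_squared[symmetric] inv_S_isometric add.commute)
  have "summable (\<lambda>n. a n + b n)"
    using assms by (simp add: ab Xt_def)
  then have "(\<lambda>n. (sum2_norm T1 T2 (snd (V2 T2 S z) n))\<^sup>2)
      sums ((A_T T2 (fst z))\<^sup>2 + (\<Sum>n. a n + b n))"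
    by (rule sums_add_shifted) (simp_all add: a_def b_def V2_def sum2_norm_squared)
  then have "V2 T2 S z \<in> Xt T1 T2 \<and> tnorm T1 T2 (V2 T2 S z)
      = sqrt ((norm (T2 (fst z)))\<^sup>2 + (A_T T2 (fst z))\<^sup>2 + (\<Sum>n. (sum2_norm T1 T2 (snd z n))\<^sup>2))"
    by (simp add: Xt_tnorm_if_sums ab add.assoc)
  then show ?thesis
    by (simp add: A_T_squared[OF contractive_T2] tnorm_def)
qed

lemma dilation_approximation:
  assumes "z \<in> Xt T1 T2" "e > 0"
  shows "\<exists>k c s1 s2 x. tnorm T1 T2 (tsub z (foldr tadd
    (map (\<lambda>i. tscale (c i) ((V1 T1 S ^^ s1 i) ((V2 T2 S ^^ s2 i) (temb (x i))))) [0..<k]) tzero)) < e"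
proof -
  obtain K where "norm (tnorm T1 T2 (tsub z (ttrunc K z)) - 0) < e"
    using LIMSEQ_D[OF tnorm_tsub_ttrunc_tendsto[OF linear_T1 linear_T2 assms(1)] assms(2)] by blast
  then have "tnorm T1 T2 (tsub z (ttrunc K z)) < e"
    by (simp add: abs_less_iff)
  moreover obtain k c s1 s2 x where "ttrunc K z = foldr tadd
      (map (\<lambda>i. tscale (c i) ((V1 T1 S ^^ s1 i) ((V2 T2 S ^^ s2 i) (temb (x i))))) [0..<k]) tzero"
    using dilation_span_finite_combination[OF ttrunc_in_dilation_span] by blast
  ultimately show ?thesis
    by (rule_tac exI[of _ k], rule_tac exI[of _ c], rule_tac exI[of _ s1], rule_tac exI[of _ s2],
        rule_tac exI[of _ x]) simp
qed

end

theorem mainTheorem5: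
  fixes T1 T2 :: "'a::banach \<Rightarrow> 'a"
    and S :: "'a \<times> 'a \<Rightarrow> 'a \<times> 'a"
  assumes T1c: "strict_contraction T1"
    and T2c: "strict_contraction T2"
    and comm: "T1 \<circ> T2 = T2 \<circ> T1"
    and A1: "is_norm (A_T T1)"
    and A2: "is_norm (A_T T2)"
    and S_lin: "linear S"
    and S_iso: "\<And>p. sum2_norm T1 T2 (S p) = sum2_norm T1 T2 p"
    and S_surj: "surj S"
    and S_eq: "\<And>x. S (T2 x, x) = (x, T1 x)"
  defines "X \<equiv> Xt T1 T2" and "N \<equiv> tnorm T1 T2"
  shows
    \<comment> \<open>V_1, V_2 map X~ into itself\<close>
    "(\<forall>z\<in>X. V1 T1 S z \<in> X \<and> V2 T2 S z \<in> X)
     \<comment> \<open>linearity\<close>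
     \<and> (\<forall>z\<in>X. \<forall>w\<in>X. V1 T1 S (tadd z w) = tadd (V1 T1 S z) (V1 T1 S w)
                     \<and> V2 T2 S (tadd z w) = tadd (V2 T2 S z) (V2 T2 S w))
     \<and> (\<forall>z\<in>X. \<forall>c. V1 T1 S (tscale c z) = tscale c (V1 T1 S z)
                   \<and> V2 T2 S (tscale c z) = tscale c (V2 T2 S z))
     \<comment> \<open>isometries\<close>
     \<and> (\<forall>z\<in>X. N (V1 T1 S z) = N z \<and> N (V2 T2 S z) = N z)
     \<comment> \<open>commuting\<close>
     \<and> (\<forall>z\<in>X. V1 T1 S (V2 T2 S z) = V2 T2 S (V1 T1 S z))
     \<comment> \<open>dilation property\<close>
     \<and> (\<forall>x s1 s2. fst ((V1 T1 S ^^ s1) ((V2 T2 S ^^ s2) (temb x))) = (T1 ^^ s1) ((T2 ^^ s2) x))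
     \<comment> \<open>minimality: X~ is the closed linear span of {V_1^s1 V_2^s2 x}\<close>
     \<and> (\<forall>z\<in>X. \<forall>e>0. \<exists>k::nat. \<exists>c :: nat \<Rightarrow> real. \<exists>s1 s2 :: nat \<Rightarrow> nat. \<exists>x :: nat \<Rightarrow> 'a.
           N (tsub z (foldr tadd (map (\<lambda>i. tscale (c i) ((V1 T1 S ^^ s1 i) ((V2 T2 S ^^ s2 i) (temb (x i))))) [0..<k]) tzero)) < e)"
proof -
  interpret contractive_dilation_setting T1 T2 S
    using strict_contraction_linear[OF T1c] strict_contraction_linear[OF T2c] comm S_lin S_surj S_eq
      S_iso inj_if_sum2_norm_preserving[OF A1 A2 S_lin S_iso]
      strict_contraction_norm_le[OF T1c] strict_contraction_norm_le[OF T2c]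
    by (simp add: contractive_dilation_setting_def dilation_setting_def
        contractive_dilation_setting_axioms_def bij_def fun_eq_iff)
  show ?thesis
    unfolding X_def N_def
    using V1_isometric V2_isometric V1_tadd V2_tadd V1_tscale V2_tscale V1_V2_commute
      dilation_approximation
    by (simp add: fst_V1_pow fst_V2_pow temb_def)
qed

end
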